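(* Consider the following hybrid sealed-bid auction for a single item. There are $n_A$ "integrated" bidders, each with a private value drawn independently from the uniform distribution on $[0,1]$, and a single "non-integrated" bidder with private value $v \in [0,1]$, independent of the others. All bidders simultaneously submit bids and the highest bidder wins. If the winner is integrated, it pays the second-highest bid; if the winner is the non-integrated bidder, it pays its own bid. Suppose every integrated bidder bids its true value. Then in equilibrium the non-integrated bidder with value $v$ bids $\frac{n_A}{n_A+1} v$, and its equilibrium interim expected surplus is $$S(v) = \left(\frac{n_A}{n_A+1}\right)^{n_A} \frac{v^{n_A+1}}{n_A+1},$$ whereas if this bidder were also integrated (i.e. paid the second-highest bid upon winning and bid truthfully) its interim expected surplus would be $$S(v) = \frac{v^{n_A+1}}{n_A+1}.$$ In particular, being the sole non-integrated bidder costs it a fraction $\left(\frac{n_A}{n_A+1}\right)^{n_A}$ of its surplus relative to being integrated.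
   Context: Bidders are risk neutral with quasilinear utility (value minus payment if winning, zero otherwise). Interim expected surplus means the expected utility of the bidder conditional on its own value $v$. *)

theory Defs
  imports "HOL-Probability.Probability"
begin

definition valM :: "nat \<Rightarrow> (nat \<Rightarrow> real) measure" where
  "valM n = PiM {..<n} (\<lambda>_. uniform_measure lborel {0..1::real})"

text \<open>Interim expected utility of the non-integrated bidder with value v bidding b,
  when the n integrated bidders bid truthfully: it wins iff its bid exceeds all
  integrated bids (ties have probability zero) and then pays its own bid.\<close>
definition nonint_utility :: "nat \<Rightarrow> real \<Rightarrow> real \<Rightarrow> real" where
  "nonint_utility n v b =
     (\<integral>x. (if (\<forall>i<n. x i < b) then v - b else 0) \<partial>valM n)"

text \<open>Interim expected utility of the same bidder if it were integrated and bid truthfully: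
  it wins iff its value exceeds all other bids and pays the second-highest bid,
  i.e. the highest of the other bids.\<close>
definition int_utility :: "nat \<Rightarrow> real \<Rightarrow> real" where
  "int_utility n v =
     (\<integral>x. (if (\<forall>i<n. x i < v) then v - (MAX i\<in>{..<n}. x i) else 0) \<partial>valM n)"

end

theory Submission
  imports Defs
begin

text \<open>With truthful integrated bidders, a bid \<open>b \<in> [0,1]\<close> of the non-integrated bidder wins
  with probability \<open>b ^ n\<close>, so its interim utility is \<open>(v - b) b ^ n\<close>, a function maximised
  exactly at \<open>b = n v / (n + 1)\<close>. As an integrated bidder it would receive
  \<open>(v - max x)\<^sup>+ = \<integral>\<^sub>0\<^sup>v [max x < s] ds\<close>; exchanging the order of integration turns its
  expectation into \<open>\<integral>\<^sub>0\<^sup>v s ^ n ds = v ^ (n + 1) / (n + 1)\<close>.\<close>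

lemma prob_space_uniform_unit: "prob_space (uniform_measure lborel {0..1::real})"
  by (intro prob_space_uniform_measure) auto

lemma prob_space_valM: "prob_space (valM n)"
  unfolding valM_def by (intro prob_space_PiM prob_space_uniform_unit)

lemma space_valM: "space (valM n) = PiE {..<n} (\<lambda>_. UNIV)"
  unfolding valM_def by (simp add: space_PiM)

lemma emeasure_valM_PiE:
  assumes "A \<in> sets borel"
  shows "emeasure (valM n) (PiE {..<n} (\<lambda>_. A)) = emeasure lborel (A \<inter> {0..1}) ^ n"
proof -
  interpret product_sigma_finite "\<lambda>_::nat. uniform_measure lborel {0..1::real}"
    using prob_space_uniform_unit
    by (simp add: product_sigma_finite_def prob_space_imp_sigma_finite)
  have "emeasure (valM n) (PiE {..<n} (\<lambda>_. A))
      = (\<Prod>i<n. emeasure (uniform_measure lborel {0..1}) A)"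
    unfolding valM_def using assms by (intro emeasure_PiM) auto
  also have "emeasure (uniform_measure lborel {0..1}) A = emeasure lborel (A \<inter> {0..1})"
    using assms by (simp add: Int_commute divide_ennreal_def)
  finally show ?thesis by simp
qed

lemma emeasure_lessThan_Int_unit:
  "emeasure lborel ({..<c} \<inter> {0..1::real}) = ennreal (max 0 (min 1 c))"
proof -
  consider "c \<le> 0" | "0 < c" "c \<le> 1" | "1 < c" by linarith
  then show ?thesis
  proof cases
    case 1
    then have "{..<c} \<inter> {0..1::real} = {}" by auto
    then show ?thesis using 1 by simp
  next
    case 2
    then have "{..<c} \<inter> {0..1::real} = {0..<c}" by auto
    then show ?thesis using 2 by simp
  next
    case 3
    then have "{..<c} \<inter> {0..1::real} = {0..1}" by auto
    then show ?thesis using 3 by simp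
  qed
qed

lemma valM_all_less_eq_PiE:
  "{x \<in> space (valM n). \<forall>i<n. x i < c} = PiE {..<n} (\<lambda>_. {..<c})"
  unfolding space_valM by (auto simp: PiE_def Pi_def)

lemma sets_valM_all_less: "{x \<in> space (valM n). \<forall>i<n. x i < c} \<in> sets (valM n)"
proof -
  have "PiE {..<n} (\<lambda>_. {..<c}) \<in> sets (valM n)"
    unfolding valM_def by (intro sets_PiM_I_finite) auto
  then show ?thesis by (simp only: valM_all_less_eq_PiE)
qed

lemma emeasure_valM_all_less:
  "emeasure (valM n) {x \<in> space (valM n). \<forall>i<n. x i < c} = ennreal (max 0 (min 1 c) ^ n)"
proof -
  have "emeasure (valM n) {x \<in> space (valM n). \<forall>i<n. x i < c}
      = emeasure lborel ({..<c} \<inter> {0..1}) ^ n"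
    unfolding valM_all_less_eq_PiE by (rule emeasure_valM_PiE) simp
  also have "\<dots> = ennreal (max 0 (min 1 c)) ^ n"
    by (simp only: emeasure_lessThan_Int_unit)
  also have "\<dots> = ennreal (max 0 (min 1 c) ^ n)"
    by (rule ennreal_power) simp
  finally show ?thesis .
qed

lemma measure_valM_all_less:
  "measure (valM n) {x \<in> space (valM n). \<forall>i<n. x i < c} = max 0 (min 1 c) ^ n"
  by (simp add: measure_def emeasure_valM_all_less)

lemma AE_valM_nonneg: "AE x in valM n. \<forall>i<n. 0 \<le> x i"
proof -
  interpret prob_space "valM n" by (rule prob_space_valM)
  have "prob (PiE {..<n} (\<lambda>_. {0..1})) = 1"
    by (simp add: measure_def emeasure_valM_PiE)
  then have "AE x in valM n. x \<in> PiE {..<n} (\<lambda>_. {0..1})" by (rule AE_prob_1)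
  then show ?thesis by eventually_elim (simp add: PiE_iff)
qed

lemma nonint_utility_eq: "nonint_utility n v b = (v - b) * max 0 (min 1 b) ^ n"
proof -
  let ?W = "{x \<in> space (valM n). \<forall>i<n. x i < b}"
  have "nonint_utility n v b = (\<integral>x. (v - b) * indicator ?W x \<partial>valM n)"
    unfolding nonint_utility_def by (intro Bochner_Integration.integral_cong) auto
  also have "\<dots> = (v - b) * measure (valM n) (?W \<inter> space (valM n))"
    by (simp only: integral_mult_right_zero Bochner_Integration.integral_indicator)
  also have "?W \<inter> space (valM n) = ?W"
    by blast
  finally show ?thesis by (simp only: measure_valM_all_less)
qed

lemma bid_profit_strict_max:
  fixes v x :: real
  assumes n: "0 < n" and v: "0 \<le> v" and x: "0 \<le> x" and ne: "x \<noteq> real n / (real n + 1) * v"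
  shows "(v - x) * x ^ n < (v - real n / (real n + 1) * v) * (real n / (real n + 1) * v) ^ n"
proof -
  define c where "c = real n / (real n + 1) * v"
  define p where "p y = (v - y) * y ^ n" for y
  have c0: "0 \<le> c" unfolding c_def using v by simp
  have p': "(p has_real_derivative (real n + 1) * y ^ (n - 1) * (c - y)) (at y)" for y
  proof -
    have "(p has_real_derivative - 1 * y ^ n + (v - y) * (real n * y ^ (n - 1))) (at y)"
      unfolding p_def by (intro derivative_eq_intros) auto
    moreover have "y ^ n = y * y ^ (n - 1)" using n by (cases n) auto
    then have "- 1 * y ^ n + (v - y) * (real n * y ^ (n - 1))
        = y ^ (n - 1) * (real n * v - (real n + 1) * y)"
      by (simp add: algebra_simps)
    also have "\<dots> = (real n + 1) * y ^ (n - 1) * (c - y)"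
      unfolding c_def by (simp add: field_simps)
    ultimately show ?thesis by (simp only:)
  qed
  have cont: "continuous_on A p" for A
    unfolding p_def by (intro continuous_intros)
  have "p x < p c"
  proof (cases "x < c")
    case True
    show ?thesis
    proof (rule DERIV_pos_imp_increasing_open[OF True _ cont])
      fix y assume "x < y" "y < c"
      with x have "0 < (real n + 1) * y ^ (n - 1) * (c - y)" by simp
      with p' show "\<exists>d. (p has_real_derivative d) (at y) \<and> 0 < d" by blast
    qed
  next
    case False
    with ne have "c < x" unfolding c_def by simp
    then show ?thesis
    proof (rule DERIV_neg_imp_decreasing_open[OF _ _ cont])
      fix y assume "c < y" "y < x"
      with c0 have "(real n + 1) * y ^ (n - 1) * (c - y) < 0" by (simp add: mult_pos_neg)
      with p' show "\<exists>d. (p has_real_derivative d) (at y) \<and> d < 0" by blast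
    qed
  qed
  then show ?thesis unfolding p_def c_def .
qed

lemma nn_integral_power_atLeastAtMost:
  fixes v :: real
  assumes "0 \<le> v"
  shows "(\<integral>\<^sup>+s. ennreal (s ^ n * indicator {0..v} s) \<partial>lborel) = ennreal (v ^ (n + 1) / (real n + 1))"
proof -
  have "integrable lborel (\<lambda>s. s ^ n * indicator {0..v} s :: real)"
    by (intro borel_integrable_atLeastAtMost) auto
  then have "(\<integral>\<^sup>+s. ennreal (s ^ n * indicator {0..v} s) \<partial>lborel)
      = ennreal (\<integral>s. s ^ n * indicator {0..v} s \<partial>lborel)"
    by (intro nn_integral_eq_integral) (auto simp: indicator_def)
  also have "(\<integral>s. s ^ n * indicator {0..v} s \<partial>lborel) = v ^ (n + 1) / (real n + 1)"
    using assms by (subst integral_power) (auto simp: power_0_left)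
  finally show ?thesis .
qed

lemma Max_lessThan_less_iff:
  fixes x :: "nat \<Rightarrow> 'a::linorder"
  assumes "0 < n"
  shows "(MAX i\<in>{..<n}. x i) < s \<longleftrightarrow> (\<forall>i<n. x i < s)"
  using assms by (subst Max_less_iff) auto

lemma if_all_less_Max_eq_max_0:
  fixes x :: "nat \<Rightarrow> real"
  assumes "0 < n"
  shows "(if \<forall>i<n. x i < v then v - (MAX i\<in>{..<n}. x i) else 0) = max 0 (v - (MAX i\<in>{..<n}. x i))"
  by (simp add: Max_lessThan_less_iff[OF assms, symmetric])

lemma max_0_diff_Max_eq_nn_integral:
  fixes x :: "nat \<Rightarrow> real"
  assumes "0 < n" and "\<forall>i<n. 0 \<le> x i"
  shows "ennreal (max 0 (v - (MAX i\<in>{..<n}. x i)))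
    = (\<integral>\<^sup>+s. indicator {s. 0 \<le> s \<and> s \<le> v \<and> (\<forall>i<n. x i < s)} s \<partial>lborel)"
proof -
  define m where "m = (MAX i\<in>{..<n}. x i)"
  have "m \<in> x ` {..<n}" unfolding m_def using assms(1) by (intro Max_in) auto
  with assms(2) have "0 \<le> m" by auto
  then have "{s. 0 \<le> s \<and> s \<le> v \<and> (\<forall>i<n. x i < s)} = {m<..v}"
    unfolding Max_lessThan_less_iff[OF assms(1), symmetric] m_def[symmetric] by auto
  then show ?thesis
    by (cases "m < v") (simp_all add: m_def max_def)
qed

lemma int_utility_eq:
  assumes n: "0 < n" and v: "0 \<le> v" "v \<le> 1"
  shows "int_utility n v = v ^ (n + 1) / (real n + 1)"
proof -
  interpret prob_space "valM n" by (rule prob_space_valM)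
  interpret pair_sigma_finite "valM n" lborel by unfold_locales
  define f where "f x = max 0 (v - (MAX i\<in>{..<n}. x i))" for x :: "nat \<Rightarrow> real"
  define g where "g x s = (indicator {s. 0 \<le> s \<and> s \<le> v \<and> (\<forall>i<n. x i < s)} s :: ennreal)"
    for x :: "nat \<Rightarrow> real" and s :: real
  have g_measurable: "case_prod g \<in> borel_measurable (valM n \<Otimes>\<^sub>M lborel)"
    unfolding g_def valM_def by measurable
  have g_integral: "(\<integral>\<^sup>+x. g x s \<partial>valM n) = ennreal (s ^ n * indicator {0..v} s)" for s
  proof (cases "0 \<le> s \<and> s \<le> v")
    case True
    let ?W = "{x \<in> space (valM n). \<forall>i<n. x i < s}"
    have "(\<integral>\<^sup>+x. g x s \<partial>valM n) = (\<integral>\<^sup>+x. indicator ?W x \<partial>valM n)"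
      using True by (intro nn_integral_cong) (simp add: g_def indicator_def)
    also have "\<dots> = ennreal (max 0 (min 1 s) ^ n)"
      by (simp only: nn_integral_indicator[OF sets_valM_all_less] emeasure_valM_all_less)
    finally show ?thesis using True v by simp
  qed (auto simp: g_def)
  have "AE x in valM n. ennreal (f x) = (\<integral>\<^sup>+s. g x s \<partial>lborel)"
    using AE_valM_nonneg[of n]
    by eventually_elim (simp only: f_def g_def max_0_diff_Max_eq_nn_integral[OF n])
  then have "(\<integral>\<^sup>+x. ennreal (f x) \<partial>valM n) = (\<integral>\<^sup>+x. (\<integral>\<^sup>+s. g x s \<partial>lborel) \<partial>valM n)"
    by (rule nn_integral_cong_AE)
  also have "\<dots> = (\<integral>\<^sup>+s. (\<integral>\<^sup>+x. g x s \<partial>valM n) \<partial>lborel)"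
    using Fubini'[OF g_measurable] by simp
  also have "\<dots> = ennreal (v ^ (n + 1) / (real n + 1))"
    by (simp only: g_integral nn_integral_power_atLeastAtMost[OF v(1)])
  finally have nn: "(\<integral>\<^sup>+x. ennreal (f x) \<partial>valM n) = ennreal (v ^ (n + 1) / (real n + 1))" .
  have "int_utility n v = integral\<^sup>L (valM n) f"
    unfolding int_utility_def f_def if_all_less_Max_eq_max_0[OF n] ..
  also have "\<dots> = enn2real (\<integral>\<^sup>+x. ennreal (f x) \<partial>valM n)"
    unfolding f_def valM_def by (intro integral_eq_nn_integral) auto
  also have "\<dots> = v ^ (n + 1) / (real n + 1)"
    using v by (simp add: nn)
  finally show ?thesis .
qed

lemma nonint_utility_optimal_bid:
  assumes "0 \<le> v" and "v \<le> 1"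
  shows "nonint_utility n v (real n / (real n + 1) * v)
    = (real n / (real n + 1)) ^ n * v ^ (n + 1) / (real n + 1)"
proof -
  let ?c = "real n / (real n + 1) * v"
  have "?c \<le> v" using assms(1) by (intro mult_left_le_one_le) auto
  with assms have "max 0 (min 1 ?c) = ?c" by simp
  moreover have "v - ?c = v / (real n + 1)" by (simp add: field_simps)
  ultimately have "nonint_utility n v ?c = v / (real n + 1) * ((real n / (real n + 1)) ^ n * v ^ n)"
    by (simp only: nonint_utility_eq power_mult_distrib)
  then show ?thesis by (simp add: field_simps)
qed

lemma nonint_utility_less_optimal_bid:
  assumes n: "0 < n" and v: "0 < v" "v \<le> 1" and b: "b \<noteq> real n / (real n + 1) * v"
  shows "nonint_utility n v b < nonint_utility n v (real n / (real n + 1) * v)"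
proof -
  define c where "c = real n / (real n + 1) * v"
  define p where "p x = (v - x) * x ^ n" for x
  have "c \<le> real n / (real n + 1)" unfolding c_def using v by (intro mult_left_le) auto
  also have "\<dots> < 1" by simp
  finally have c: "0 < c" "c < 1" unfolding c_def using n v by auto
  have p_less: "0 \<le> x \<Longrightarrow> x \<noteq> c \<Longrightarrow> p x < p c" for x
    unfolding p_def c_def using bid_profit_strict_max[OF n less_imp_le[OF v(1)]] by blast
  have "nonint_utility n v c = p c"
    using c by (simp add: nonint_utility_eq p_def)
  moreover consider "b \<le> 0" | "0 < b" "b \<le> 1" | "1 < b" by linarith
  then have "nonint_utility n v b < p c"
  proof cases
    case 1
    then have "nonint_utility n v b = p 0" using n by (simp add: nonint_utility_eq p_def)
    then show ?thesis using p_less[of 0] c by simp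
  next
    case 2
    then have "nonint_utility n v b = p b" by (simp add: nonint_utility_eq p_def)
    then show ?thesis using p_less[of b] b 2 unfolding c_def by simp
  next
    case 3
    then have "nonint_utility n v b < p 1" by (simp add: nonint_utility_eq p_def)
    then show ?thesis using p_less[of 1] c by simp
  qed
  ultimately show ?thesis unfolding c_def by simp
qed

lemma nonint_utility_le_optimal_bid:
  assumes n: "0 < n" and v: "0 \<le> v" "v \<le> 1"
  shows "nonint_utility n v b \<le> nonint_utility n v (real n / (real n + 1) * v)"
proof (cases "v = 0")
  case True
  have "- b * max 0 (min 1 b) ^ n \<le> 0"
    using n by (cases "b \<le> 0") (auto simp: mult_nonpos_nonneg power_0_left)
  then show ?thesis using True by (simp add: nonint_utility_eq)
next
  case False
  with v have "0 < v" by simp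
  then show ?thesis
    using nonint_utility_less_optimal_bid[OF n _ v(2), of b]
    by (cases "b = real n / (real n + 1) * v") auto
qed

theorem mainTheorem2:
  fixes n :: nat and v :: real
  assumes "0 < n" and "0 \<le> v" and "v \<le> 1"
  shows "(\<forall>b. nonint_utility n v b \<le> nonint_utility n v (real n / (real n + 1) * v))
    \<and> (0 < v \<longrightarrow> (\<forall>b. nonint_utility n v b = nonint_utility n v (real n / (real n + 1) * v)
                        \<longrightarrow> b = real n / (real n + 1) * v))
    \<and> nonint_utility n v (real n / (real n + 1) * v)
        = (real n / (real n + 1)) ^ n * v ^ (n + 1) / (real n + 1)
    \<and> int_utility n v = v ^ (n + 1) / (real n + 1)"
proof (intro conjI allI impI)
  fix b
  show "nonint_utility n v b \<le> nonint_utility n v (real n / (real n + 1) * v)"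
    using nonint_utility_le_optimal_bid[OF assms] .
next
  fix b
  assume "0 < v" and "nonint_utility n v b = nonint_utility n v (real n / (real n + 1) * v)"
  then show "b = real n / (real n + 1) * v"
    using nonint_utility_less_optimal_bid[OF assms(1) _ assms(3), of b] by force
next
  show "nonint_utility n v (real n / (real n + 1) * v)
      = (real n / (real n + 1)) ^ n * v ^ (n + 1) / (real n + 1)"
    using nonint_utility_optimal_bid[OF assms(2,3)] .
next
  show "int_utility n v = v ^ (n + 1) / (real n + 1)"
    using int_utility_eq[OF assms] .
qed

end
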